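(* Every geometric centrality has ties on every graph that is not geometrically rigid. Moreover, there exists a geometric centrality $f$ such that for every geometrically rigid graph $G$, $f$ has no ties on $G$.
   Context: A graph $G$ is a finite directed graph with node set $V_G=\{0,\dots,n-1\}$ and arc set $E_G\subseteq V_G\times V_G$. A path of length $k$ from $x$ to $y$ is a sequence $x=x_0,\dots,x_k=y$ with $(x_i,x_{i+1})\in E_G$; $d_G(x,y)$ is the length of a shortest such path, or $\infty$ if none exists. An isomorphism $\varphi:G\to H$ is a bijection with $x\to_G y$ iff $\varphi(x)\to_H\varphi(y)$. A centrality $f$ assigns to each graph $G$ a map $f_G:V_G\to\mathbb{R}$ with $f_G(x)=f_H(\varphi(x))$ for every isomorphism $\varphi:G\to H$. $f$ has no ties on $G$ if $f_G(x)\ne f_G(y)$ for all distinct $x,y$. For a node $i$, the distance-count function is $c_{G,i}:\mathbb{N}\to\mathbb{N}$, $c_{G,i}(k)=|\{j\in V_G: d_G(j,i)=k\}|$. The distance-count matrix $C_G\in\mathbb{R}^{n\times n}$ has entries $(C_G)_{i,k}=c_{G,i}(k)$ for $i,k\in\{0,\dots,n-1\}$. $G$ is geometrically rigid if the rows of $C_G$ are pairwise distinct. A centrality $f$ respects a permutation $\pi$ of $V_G$ on $G$ if $f_G(\pi(i))\ge f_G(\pi(i+1))$ for all $i<n-1$; two centralities are equivalent if on every graph they respect exactly the same permutations. A centrality $f$ is strictly geometric if for all graphs $G,G'$ and nodes $i\in V_G$, $i'\in V_{G'}$, $c_{G,i}=c_{G',i'}$ implies $f_G(i)=f_{G'}(i')$;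 it is geometric if it is equivalent to a strictly geometric centrality. *)

theory Defs
  imports Main "HOL-Library.Extended_Nat" "HOL-Combinatorics.Permutations"
begin

text \<open>A graph is a pair (n, E): node set {0..<n}, arc set E \<subseteq> V \<times> V.\<close>
type_synonym graph = "nat \<times> (nat \<times> nat) set"

definition nodes :: "graph \<Rightarrow> nat set" where
  "nodes G = {..<fst G}"

definition arcs :: "graph \<Rightarrow> (nat \<times> nat) set" where
  "arcs G = snd G"

definition wf_graph :: "graph \<Rightarrow> bool" where
  "wf_graph G \<longleftrightarrow> arcs G \<subseteq> nodes G \<times> nodes G"

definition gdist :: "graph \<Rightarrow> nat \<Rightarrow> nat \<Rightarrow> enat" where
  "gdist G x y = (if \<exists>k. (x, y) \<in> arcs G ^^ k
                  then enat (LEAST k. (x, y) \<in> arcs G ^^ k) else \<infinity>)"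

definition is_iso :: "graph \<Rightarrow> graph \<Rightarrow> (nat \<Rightarrow> nat) \<Rightarrow> bool" where
  "is_iso G H \<phi> \<longleftrightarrow> bij_betw \<phi> (nodes G) (nodes H) \<and>
     (\<forall>x\<in>nodes G. \<forall>y\<in>nodes G. (x, y) \<in> arcs G \<longleftrightarrow> (\<phi> x, \<phi> y) \<in> arcs H)"

text \<open>A centrality assigns to each graph G a map on its nodes (values off V_G are irrelevant).\<close>
definition is_centrality :: "(graph \<Rightarrow> nat \<Rightarrow> real) \<Rightarrow> bool" where
  "is_centrality f \<longleftrightarrow> (\<forall>G H \<phi>. wf_graph G \<longrightarrow> wf_graph H \<longrightarrow> is_iso G H \<phi> \<longrightarrow>
      (\<forall>x\<in>nodes G. f G x = f H (\<phi> x)))"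

definition has_no_ties :: "(graph \<Rightarrow> nat \<Rightarrow> real) \<Rightarrow> graph \<Rightarrow> bool" where
  "has_no_ties f G \<longleftrightarrow> (\<forall>x\<in>nodes G. \<forall>y\<in>nodes G. x \<noteq> y \<longrightarrow> f G x \<noteq> f G y)"

definition dcount :: "graph \<Rightarrow> nat \<Rightarrow> nat \<Rightarrow> nat" where
  "dcount G i k = card {j \<in> nodes G. gdist G j i = enat k}"

text \<open>Rows of the distance-count matrix C_G (columns k = 0..n-1) are pairwise distinct.\<close>
definition geom_rigid :: "graph \<Rightarrow> bool" where
  "geom_rigid G \<longleftrightarrow> (\<forall>i\<in>nodes G. \<forall>j\<in>nodes G. i \<noteq> j \<longrightarrow>
      (\<lambda>k\<in>{..<fst G}. dcount G i k) \<noteq> (\<lambda>k\<in>{..<fst G}. dcount G j k))"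

definition respects_perm :: "(graph \<Rightarrow> nat \<Rightarrow> real) \<Rightarrow> graph \<Rightarrow> (nat \<Rightarrow> nat) \<Rightarrow> bool" where
  "respects_perm f G \<pi> \<longleftrightarrow> (\<forall>i. i + 1 < fst G \<longrightarrow> f G (\<pi> i) \<ge> f G (\<pi> (i + 1)))"

definition centrality_equiv :: "(graph \<Rightarrow> nat \<Rightarrow> real) \<Rightarrow> (graph \<Rightarrow> nat \<Rightarrow> real) \<Rightarrow> bool" where
  "centrality_equiv f g \<longleftrightarrow> (\<forall>G \<pi>. wf_graph G \<longrightarrow> \<pi> permutes nodes G \<longrightarrow>
      (respects_perm f G \<pi> \<longleftrightarrow> respects_perm g G \<pi>))"

definition strictly_geometric :: "(graph \<Rightarrow> nat \<Rightarrow> real) \<Rightarrow> bool" where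
  "strictly_geometric f \<longleftrightarrow> (\<forall>G G' i i'. wf_graph G \<longrightarrow> wf_graph G' \<longrightarrow>
      i \<in> nodes G \<longrightarrow> i' \<in> nodes G' \<longrightarrow> dcount G i = dcount G' i' \<longrightarrow> f G i = f G' i')"

definition geometric :: "(graph \<Rightarrow> nat \<Rightarrow> real) \<Rightarrow> bool" where
  "geometric f \<longleftrightarrow> (\<exists>g. is_centrality g \<and> strictly_geometric g \<and> centrality_equiv f g)"

end

theory Submission
  imports Defs "HOL-Library.Countable" "HOL-Computational_Algebra.Polynomial"
begin

(* A centrality f without ties on G strictly orders the nodes along some permutation \<pi> that f
   respects. If a centrality g equivalent to f took equal values on two nodes, g would be constant
   between their positions along \<pi>, in particular on two adjacent positions; swapping them gives a
   permutation that g still respects but f does not. Hence a geometric centrality, being equivalent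
   to a strictly geometric one, can only be tie-free if distinct nodes have distinct distance-count
   functions, i.e. on geometrically rigid graphs.
   Conversely, the distance-count function of a node vanishes from n on, so it is the coefficient
   sequence of a polynomial over nat; encoding that polynomial injectively into the reals gives a
   strictly geometric centrality that separates the nodes of every geometrically rigid graph. *)

(* A path of at least card A steps revisits a node; cutting out the cycle shortens it. *)
lemma relpow_shortcut:
  assumes path: "(x, y) \<in> R ^^ k" and R: "R \<subseteq> A \<times> A" and "finite A" "x \<in> A"
    and long: "card A \<le> k"
  obtains k' where "k' < k" "(x, y) \<in> R ^^ k'"
proof -
  obtain p where p0: "p 0 = x" and pk: "p k = y" and step: "\<forall>i<k. (p i, p (Suc i)) \<in> R"
    using path unfolding relpow_fun_conv by blast
  have "p i \<in> A" if "i \<le> k" for i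
  proof (cases i)
    case 0
    then show ?thesis using p0 \<open>x \<in> A\<close> by simp
  next
    case (Suc m)
    then have "(p m, p i) \<in> R" using step that by simp
    then show ?thesis using R by blast
  qed
  then have "p ` {..k} \<subseteq> A" by auto
  then have "\<not> inj_on p {..k}"
    using card_inj_on_le[of p "{..k}" A] \<open>finite A\<close> long by auto
  then obtain a b where ab: "a < b" "b \<le> k" "p a = p b"
    unfolding inj_on_def by (auto simp: neq_iff)
  have "(x, p a) \<in> R ^^ a"
    unfolding relpow_fun_conv using p0 step ab by (intro exI[of _ p]) auto
  moreover have "(p b, y) \<in> R ^^ (k - b)"
    unfolding relpow_fun_conv using pk step ab by (intro exI[of _ "\<lambda>i. p (b + i)"]) auto
  ultimately have "(x, y) \<in> R ^^ (a + (k - b))"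
    unfolding relpow_add using ab(3) by auto
  moreover have "a + (k - b) < k" using ab by simp
  ultimately show thesis using that by blast
qed

lemma Least_relpow_less_card:
  assumes "(x, y) \<in> R ^^ k" "R \<subseteq> A \<times> A" "finite A" "x \<in> A"
  shows "(LEAST k. (x, y) \<in> R ^^ k) < card A"
proof (rule ccontr)
  let ?d = "LEAST k. (x, y) \<in> R ^^ k"
  have shortest: "(x, y) \<in> R ^^ ?d" using assms(1) by (rule LeastI)
  assume "\<not> ?d < card A"
  then have "card A \<le> ?d" by simp
  with shortest obtain k' where "k' < ?d" "(x, y) \<in> R ^^ k'"
    by (rule relpow_shortcut[OF _ assms(2-4)])
  then show False by (blast dest: not_less_Least)
qed

lemma relpow_bij_betw_iff:
  assumes bij: "bij_betw \<phi> A B" and R: "R \<subseteq> A \<times> A" and S: "S \<subseteq> B \<times> B"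
    and hom: "\<forall>x\<in>A. \<forall>y\<in>A. (x, y) \<in> R \<longleftrightarrow> (\<phi> x, \<phi> y) \<in> S"
    and "u \<in> A" "v \<in> A"
  shows "(u, v) \<in> R ^^ k \<longleftrightarrow> (\<phi> u, \<phi> v) \<in> S ^^ k"
  using \<open>v \<in> A\<close>
proof (induction k arbitrary: v)
  case 0
  then show ?case using bij \<open>u \<in> A\<close> by (auto simp: bij_betw_def inj_on_eq_iff)
next
  case (Suc k)
  have "(u, v) \<in> R ^^ Suc k \<longleftrightarrow> (\<exists>w\<in>A. (u, w) \<in> R ^^ k \<and> (w, v) \<in> R)"
    unfolding relpow.simps(2) using R by blast
  also have "\<dots> \<longleftrightarrow> (\<exists>w\<in>A. (\<phi> u, \<phi> w) \<in> S ^^ k \<and> (\<phi> w, \<phi> v) \<in> S)"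
    using Suc.IH Suc.prems hom by (intro bex_cong conj_cong) simp_all
  also have "\<dots> \<longleftrightarrow> (\<exists>w'\<in>\<phi> ` A. (\<phi> u, w') \<in> S ^^ k \<and> (w', \<phi> v) \<in> S)"
    by simp
  also have "\<dots> \<longleftrightarrow> (\<phi> u, \<phi> v) \<in> S ^^ Suc k"
    using S bij by (auto simp: bij_betw_def)
  finally show ?case .
qed

lemma gdist_less_card:
  assumes "wf_graph G" "j \<in> nodes G" "gdist G j i = enat k"
  shows "k < fst G"
  using assms Least_relpow_less_card[of j i _ "arcs G" "nodes G"]
  by (auto simp: gdist_def wf_graph_def nodes_def split: if_splits)

lemma dcount_eq_0:
  assumes "wf_graph G" "fst G \<le> k"
  shows "dcount G i k = 0"
proof -
  have "{j \<in> nodes G. gdist G j i = enat k} = {}"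
    using gdist_less_card[OF assms(1)] assms(2) by force
  then show ?thesis unfolding dcount_def by (simp only: card.empty)
qed

lemma gdist_is_iso:
  assumes "wf_graph G" "wf_graph H" "is_iso G H \<phi>" "u \<in> nodes G" "v \<in> nodes G"
  shows "gdist H (\<phi> u) (\<phi> v) = gdist G u v"
  using assms relpow_bij_betw_iff[of \<phi> "nodes G" "nodes H" "arcs G" "arcs H" u v]
  by (simp add: gdist_def is_iso_def wf_graph_def)

lemma dcount_is_iso:
  assumes wG: "wf_graph G" and wH: "wf_graph H" and iso: "is_iso G H \<phi>" and x: "x \<in> nodes G"
  shows "dcount H (\<phi> x) = dcount G x"
proof
  fix k
  have bij: "bij_betw \<phi> (nodes G) (nodes H)" using iso by (simp add: is_iso_def)
  have "nodes H = \<phi> ` nodes G" using bij by (simp add: bij_betw_def)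
  then have "{j \<in> nodes H. gdist H j (\<phi> x) = enat k} = \<phi> ` {j \<in> nodes G. gdist G j x = enat k}"
    using gdist_is_iso[OF wG wH iso _ x] by auto
  moreover have "inj_on \<phi> {j \<in> nodes G. gdist G j x = enat k}"
    using bij by (auto simp: bij_betw_def intro: inj_on_subset)
  ultimately show "dcount H (\<phi> x) k = dcount G x k" by (simp add: dcount_def card_image)
qed

lemma geom_rigid_iff:
  assumes "wf_graph G"
  shows "geom_rigid G \<longleftrightarrow> (\<forall>i\<in>nodes G. \<forall>j\<in>nodes G. i \<noteq> j \<longrightarrow> dcount G i \<noteq> dcount G j)"
proof -
  have "(\<lambda>k\<in>{..<fst G}. dcount G i k) = (\<lambda>k\<in>{..<fst G}. dcount G j k) \<longleftrightarrow> dcount G i = dcount G j"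
    for i j
  proof
    assume rows: "(\<lambda>k\<in>{..<fst G}. dcount G i k) = (\<lambda>k\<in>{..<fst G}. dcount G j k)"
    show "dcount G i = dcount G j"
    proof
      fix k
      show "dcount G i k = dcount G j k"
        using fun_cong[OF rows, of k] dcount_eq_0[OF assms] by (cases "k < fst G") auto
    qed
  qed simp
  then show ?thesis by (simp add: geom_rigid_def)
qed

lemma ex_respects_perm: "\<exists>\<pi>. \<pi> permutes nodes G \<and> respects_perm f G \<pi>"
proof -
  define xs where "xs = sort_key (\<lambda>x. - f G x) [0..<fst G]"
  define \<pi> where "\<pi> i = (if i < fst G then xs ! i else i)" for i
  have xs: "distinct xs" "set xs = nodes G" "length xs = fst G"
    by (simp_all add: xs_def nodes_def atLeast0LessThan)
  have "bij_betw ((!) xs) (nodes G) (nodes G)"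
    using xs by (intro bij_betw_nth) (simp_all add: nodes_def)
  then have "bij_betw \<pi> (nodes G) (nodes G)"
    by (rule bij_betw_cong[THEN iffD1, rotated]) (simp add: \<pi>_def nodes_def)
  then have "\<pi> permutes nodes G"
    by (rule bij_imp_permutes) (simp add: \<pi>_def nodes_def)
  moreover have "respects_perm f G \<pi>"
    unfolding respects_perm_def
  proof (intro allI impI)
    fix i assume i: "i + 1 < fst G"
    have "sorted (map (\<lambda>x. - f G x) xs)" by (simp add: xs_def)
    then have "map (\<lambda>x. - f G x) xs ! i \<le> map (\<lambda>x. - f G x) xs ! (i + 1)"
      using i xs(3) by (intro sorted_nth_mono) simp_all
    then show "f G (\<pi> (i + 1)) \<le> f G (\<pi> i)" using i xs(3) by (simp add: \<pi>_def)
  qed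
  ultimately show ?thesis by blast
qed

lemma respects_perm_antimono:
  assumes resp: "respects_perm f G \<pi>" and "p \<le> q" "q < fst G"
  shows "f G (\<pi> q) \<le> f G (\<pi> p)"
  using assms(2,3)
proof (induction q)
  case 0
  then show ?case by simp
next
  case (Suc q)
  show ?case
  proof (cases "p = Suc q")
    case False
    then have "f G (\<pi> q) \<le> f G (\<pi> p)" using Suc by simp
    moreover have "f G (\<pi> (Suc q)) \<le> f G (\<pi> q)"
      using resp Suc.prems by (simp add: respects_perm_def)
    ultimately show ?thesis by simp
  qed simp
qed

lemma respects_perm_swap_tie:
  assumes "respects_perm f G \<pi>" "f G (\<pi> a) = f G (\<pi> (Suc a))"
  shows "respects_perm f G (\<pi> \<circ> transpose a (Suc a))"
proof -
  have "f G ((\<pi> \<circ> transpose a (Suc a)) q) = f G (\<pi> q)" for q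
    using assms(2) by (simp add: transpose_def)
  then show ?thesis using assms(1) by (simp add: respects_perm_def)
qed

lemma centrality_equiv_has_no_ties:
  assumes equiv: "centrality_equiv f g" and G: "wf_graph G" and no_ties: "has_no_ties f G"
  shows "has_no_ties g G"
proof -
  obtain \<pi> where \<pi>: "\<pi> permutes nodes G" and f_resp: "respects_perm f G \<pi>"
    using ex_respects_perm by blast
  have g_resp: "respects_perm g G \<pi>"
    using equiv G \<pi> f_resp unfolding centrality_equiv_def by blast
  have g_strict: "g G (\<pi> (Suc a)) < g G (\<pi> a)" if a: "a + 1 < fst G" for a
  proof -
    have a_nodes: "a \<in> nodes G" "Suc a \<in> nodes G" using a by (simp_all add: nodes_def)
    have "g G (\<pi> (a + 1)) \<le> g G (\<pi> a)" using g_resp a unfolding respects_perm_def by blast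
    moreover have "g G (\<pi> a) \<noteq> g G (\<pi> (Suc a))"
    proof
      assume tie: "g G (\<pi> a) = g G (\<pi> (Suc a))"
      let ?\<sigma> = "\<pi> \<circ> transpose a (Suc a)"
      have "transpose a (Suc a) permutes nodes G" using a_nodes by (rule permutes_swap_id)
      then have "?\<sigma> permutes nodes G" using \<pi> by (rule permutes_compose)
      moreover have "respects_perm g G ?\<sigma>" using g_resp tie by (rule respects_perm_swap_tie)
      ultimately have "respects_perm f G ?\<sigma>" using equiv G unfolding centrality_equiv_def by blast
      then have "f G (?\<sigma> (a + 1)) \<le> f G (?\<sigma> a)" using a unfolding respects_perm_def by blast
      moreover have "f G (\<pi> (a + 1)) \<le> f G (\<pi> a)" using f_resp a unfolding respects_perm_def by blast
      moreover have "f G (\<pi> a) \<noteq> f G (\<pi> (Suc a))"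
        using no_ties a_nodes permutes_in_image[OF \<pi>] inj_eq[OF permutes_inj[OF \<pi>]]
        unfolding has_no_ties_def by simp
      ultimately show False by simp
    qed
    ultimately show ?thesis by simp
  qed
  have separated: "g G (\<pi> p) \<noteq> g G (\<pi> q)" if "p < q" "q < fst G" for p q
  proof -
    have "g G (\<pi> q) \<le> g G (\<pi> (Suc p))"
      by (rule respects_perm_antimono[OF g_resp]) (use that in simp_all)
    then show ?thesis using g_strict[of p] that by simp
  qed
  show ?thesis
    unfolding has_no_ties_def
  proof (intro ballI impI)
    fix i j assume "i \<in> nodes G" "j \<in> nodes G" "i \<noteq> j"
    then have "i \<in> \<pi> ` nodes G" "j \<in> \<pi> ` nodes G" using permutes_image[OF \<pi>] by simp_all
    then obtain p q where "p < fst G" "q < fst G" "i = \<pi> p" "j = \<pi> q"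
      by (auto simp: nodes_def)
    with \<open>i \<noteq> j\<close> show "g G i \<noteq> g G j"
      using separated[of p q] separated[of q p] by (cases p q rule: linorder_cases) simp_all
  qed
qed

lemma geometric_no_ties_imp_geom_rigid:
  assumes "geometric f" "wf_graph G" "has_no_ties f G"
  shows "geom_rigid G"
proof -
  obtain g where g: "strictly_geometric g" "centrality_equiv f g"
    using assms(1) by (auto simp: geometric_def)
  then have "has_no_ties g G" using assms(2,3) centrality_equiv_has_no_ties by blast
  show ?thesis
    unfolding geom_rigid_iff[OF assms(2)]
  proof (intro ballI impI)
    fix i j assume ij: "i \<in> nodes G" "j \<in> nodes G" "i \<noteq> j"
    then have "g G i \<noteq> g G j" using \<open>has_no_ties g G\<close> unfolding has_no_ties_def by blast
    then show "dcount G i \<noteq> dcount G j"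
      using g(1) assms(2) ij unfolding strictly_geometric_def by blast
  qed
qed

lemma geometric_if_strictly_geometric:
  assumes "is_centrality f" "strictly_geometric f"
  shows "geometric f"
  using assms by (auto simp: geometric_def centrality_equiv_def)

(* Abs_poly is junk unless dcount G i is eventually 0, which holds for well-formed G. *)
definition distance_poly :: "graph \<Rightarrow> nat \<Rightarrow> nat poly" where
  "distance_poly G i = Abs_poly (dcount G i)"

lemma coeff_distance_poly:
  assumes "wf_graph G"
  shows "coeff (distance_poly G i) = dcount G i"
  unfolding distance_poly_def using dcount_eq_0[OF assms] by (intro coeff_Abs_poly[where n = "fst G"]) simp

definition distance_centrality :: "graph \<Rightarrow> nat \<Rightarrow> real" where
  "distance_centrality G i = real (to_nat (coeffs (distance_poly G i)))"

lemma is_centrality_distance_centrality: "is_centrality distance_centrality"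
  by (simp add: is_centrality_def distance_centrality_def distance_poly_def dcount_is_iso)

lemma strictly_geometric_distance_centrality: "strictly_geometric distance_centrality"
  by (simp add: strictly_geometric_def distance_centrality_def distance_poly_def)

lemma has_no_ties_distance_centrality:
  assumes G: "wf_graph G" and rigid: "geom_rigid G"
  shows "has_no_ties distance_centrality G"
proof -
  have "dcount G i = dcount G j" if "distance_centrality G i = distance_centrality G j" for i j
  proof -
    have "coeffs (distance_poly G i) = coeffs (distance_poly G j)"
      using that injD[OF inj_to_nat] by (simp add: distance_centrality_def)
    then have "distance_poly G i = distance_poly G j" using coeffs_eq_iff by blast
    then show ?thesis using coeff_distance_poly[OF G] by metis
  qed
  then show ?thesis using rigid unfolding geom_rigid_iff[OF G] has_no_ties_def by blast
qed

theorem theorem2: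
  shows "(\<forall>f G. is_centrality f \<and> geometric f \<and> wf_graph G \<and> \<not> geom_rigid G
            \<longrightarrow> \<not> has_no_ties f G)
       \<and> (\<exists>f. is_centrality f \<and> geometric f \<and>
            (\<forall>G. wf_graph G \<and> geom_rigid G \<longrightarrow> has_no_ties f G))"
proof (intro conjI)
  show "\<forall>f G. is_centrality f \<and> geometric f \<and> wf_graph G \<and> \<not> geom_rigid G
            \<longrightarrow> \<not> has_no_ties f G"
    using geometric_no_ties_imp_geom_rigid by blast
  have "geometric distance_centrality"
    using is_centrality_distance_centrality strictly_geometric_distance_centrality
    by (rule geometric_if_strictly_geometric)
  then show "\<exists>f. is_centrality f \<and> geometric f \<and>
            (\<forall>G. wf_graph G \<and> geom_rigid G \<longrightarrow> has_no_ties f G)"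
    using is_centrality_distance_centrality has_no_ties_distance_centrality by blast
qed

end
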